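(* Let $\varepsilon>0$ and $q\in(0,1)$, and fix real numbers $\sigma$ and $\tau$. Then there exist constants $C>0$ and $V_0>0$, depending only on $\varepsilon$, $q$, $\sigma$ and $\tau$, such that for every real $v$ with $|v|\ge V_0$ and every complex $t$ with $\Re(t)=\tau$ satisfying $\inf_{r\in\mathbb{Z}_{\ge 0}}|1-q^{t+r}|>\varepsilon$, writing $s=\sigma+iv$, we have $$|\zeta_q(s,t)|\le \begin{cases} C & (\tau>0),\\ C\,|v| & (\tau=0),\\ C\exp\left(-\tau(1+\pi/2)\,|v|\right) & (\tau<0).\end{cases}$$
   Context: For $q\in(0,1)$ and a positive integer $m$, the $q$-integer is $[m]_q=\frac{1-q^m}{1-q}$, and $q^{w}=e^{w\log q}$ for complex $w$. The $q$-analogue of the Riemann zeta function (Kaneko–Kurokawa–Wakayama) is $\zeta_q(s,t)=\sum_{m=1}^\infty \frac{q^{mt}}{[m]_q^s}$, which converges absolutely for $s\in\mathbb{C}$, $\Re(t)>0$, and extends meromorphically to $\mathbb{C}^2$; its poles are simple and lie at $t\in\{a+2\pi i b/\log q : a,b\in\mathbb{Z},\ a\le 0\}$. For $\Re(t)\le 0$, $\zeta_q(s,t)$ denotes this meromorphic continuation (the hypothesis $\inf_{r\ge0}|1-q^{t+r}|>\varepsilon$ excludes the poles). *)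

theory Defs
  imports "HOL-Complex_Analysis.Complex_Analysis"
begin

definition qint :: "real \<Rightarrow> nat \<Rightarrow> real" where
  "qint q m = (1 - q ^ m) / (1 - q)"

definition qpow :: "real \<Rightarrow> complex \<Rightarrow> complex" where
  "qpow q w = exp (w * of_real (ln q))"

text \<open>The defining series sum over m >= 1 of q^(m t) / [m]_q^s,
  with [m]_q^s = exp (s log [m]_q) ([m]_q is a positive real).\<close>
definition zeta_q_series :: "real \<Rightarrow> complex \<Rightarrow> complex \<Rightarrow> complex" where
  "zeta_q_series q s t =
     (\<Sum>n. qpow q (of_nat (Suc n) * t) / exp (s * of_real (ln (qint q (Suc n)))))"

definition qpoles :: "real \<Rightarrow> complex set" where
  "qpoles q = {of_int a + 2 * of_real pi * \<i> * of_int b / of_real (ln q) | a b. a \<le> 0}"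

text \<open>Meromorphic continuation in t (for fixed s): the (unique, by the identity
  theorem) function holomorphic off the pole set that agrees with the series on Re t > 0.\<close>
definition zeta_q :: "real \<Rightarrow> complex \<Rightarrow> complex \<Rightarrow> complex" where
  "zeta_q q s t =
     (SOME f. f holomorphic_on (- qpoles q) \<and>
              (\<forall>u. 0 < Re u \<longrightarrow> f u = zeta_q_series q s u)) t"

end

theory Submission
  imports Defs
begin

(* For 0 <= x <= q < 1, Taylor's theorem on [0, q] gives
     (1 - x)^(-s) = sum_{k<K} (s)_k / k! x^k + R_K(x),   |R_K(x)| <= M_K(s) x^K,
   with M_K(s) of size |(s)_K|.  Since [m]_q^(-s) = (1 - q)^s (1 - q^m)^(-s), inserting x = q^m
   into the defining series and summing the geometric series of the polynomial part gives
     zeta_q(s, t) = (1 - q)^s (sum_{k<K} (s)_k / k! q^(t+k) / (1 - q^(t+k)) + sum_m q^(mt) R_K(q^m)),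
   where the last series converges for Re t > -K.  Gluing these expressions over K gives a
   holomorphic function off the poles, which is zeta_q by uniqueness of analytic continuation.
   On the line Re t = tau with K > -tau, the separation |1 - q^(t+k)| > eps bounds the finite sum,
   so |zeta_q(s, t)| = O(|s|^K).  Taking K = 0 for tau > 0 and K = 1 for tau = 0 gives the first
   two bounds; for tau < 0 a polynomial is dominated by the stated exponential. *)

definition binomial_remainder :: "complex \<Rightarrow> nat \<Rightarrow> real \<Rightarrow> complex" where
  "binomial_remainder s K x =
     exp (- s * of_real (ln (1 - x))) - (\<Sum>k<K. pochhammer s k / fact k * of_real x ^ k)"

definition binomial_remainder_bound :: "real \<Rightarrow> complex \<Rightarrow> nat \<Rightarrow> real" where
  "binomial_remainder_bound q s K = cmod (pochhammer s K) * max 1 ((1 - q) powr - (Re s + real K))"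

lemma powr_le_max_one_powr:
  fixes a y e :: real
  assumes "0 < a" "a \<le> y" "y \<le> 1"
  shows "y powr e \<le> max 1 (a powr e)"
proof (cases "e \<ge> 0")
  case True
  then have "y powr e \<le> 1 powr e"
    using assms by (intro powr_mono2) auto
  then show ?thesis by simp
next
  case False
  then have "y powr e \<le> a powr e"
    using assms by (intro powr_mono2') auto
  then show ?thesis by simp
qed

lemma norm_pochhammer_le:
  fixes s :: "'a::real_normed_field"
  shows "norm (pochhammer s k) \<le> (norm s + real k) ^ k"
proof (induction k)
  case (Suc k)
  have "norm (pochhammer s (Suc k)) = norm (pochhammer s k) * norm (s + of_nat k)"
    by (simp add: pochhammer_rec' norm_mult)
  also have "\<dots> \<le> (norm s + real k) ^ k * (norm s + real k)"
    using Suc.IH norm_triangle_ineq[of s "of_nat k"] by (intro mult_mono) auto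
  also have "\<dots> \<le> (norm s + real (Suc k)) ^ Suc k"
    by (simp only: power_Suc2) (intro mult_mono power_mono; simp)
  finally show ?case .
qed simp

lemma has_field_derivative_pochhammer_exp_Ln:
  assumes "1 - z \<notin> \<real>\<^sub>\<le>\<^sub>0"
  shows "((\<lambda>z. pochhammer s i * exp (- (s + of_nat i) * Ln (1 - z))) has_field_derivative
           pochhammer s (Suc i) * exp (- (s + of_nat (Suc i)) * Ln (1 - z))) (at z)"
proof -
  have "exp (- (s + of_nat (Suc i)) * Ln (1 - z)) =
      exp (- (s + of_nat i) * Ln (1 - z)) * exp (- Ln (1 - z))"
    by (simp add: algebra_simps flip: exp_add)
  also have "exp (- Ln (1 - z)) = inverse (1 - z)"
  proof -
    have "1 - z \<noteq> 0" using assms by auto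
    then show ?thesis by (simp add: exp_minus)
  qed
  finally have "pochhammer s (Suc i) * exp (- (s + of_nat (Suc i)) * Ln (1 - z)) =
      pochhammer s i *
        (exp (- (s + of_nat i) * Ln (1 - z)) * (- (s + of_nat i) * (inverse (1 - z) * -1)))"
    by (simp add: pochhammer_rec' algebra_simps)
  then show ?thesis
    by (auto intro!: derivative_eq_intros assms)
qed

lemma norm_pochhammer_exp_Ln_le:
  assumes "0 \<le> y" "y \<le> q" "q < 1"
  shows "cmod (pochhammer s K * exp (- (s + of_nat K) * Ln (1 - of_real y)))
           \<le> binomial_remainder_bound q s K"
proof -
  have "Ln (1 - of_real y) = of_real (ln (1 - y))"
    using assms Ln_of_real[of "1 - y"] by simp
  then have "cmod (pochhammer s K * exp (- (s + of_nat K) * Ln (1 - of_real y))) =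
      cmod (pochhammer s K) * (1 - y) powr - (Re s + real K)"
    using assms by (simp add: norm_mult powr_def)
  also have "\<dots> \<le> binomial_remainder_bound q s K"
    unfolding binomial_remainder_bound_def
    by (intro mult_left_mono powr_le_max_one_powr) (use assms in auto)
  finally show ?thesis .
qed

lemma norm_binomial_remainder_le:
  assumes "0 \<le> x" "x \<le> q" "q < 1"
  shows "cmod (binomial_remainder s K x) \<le> binomial_remainder_bound q s K * x ^ K"
proof -
  define f where "f i z = pochhammer s i * exp (- (s + of_nat i) * Ln (1 - z))" for i z
  define S where "S = complex_of_real ` {0..q}"
  have "convex S"
    unfolding S_def by (rule convex_linear_image) auto
  have "0 \<in> S" "of_real x \<in> S"
    using assms by (auto simp: S_def intro!: image_eqI[of 0])
  have f_K: "cmod (f K z) \<le> binomial_remainder_bound q s K" if "z \<in> S" for z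
  proof -
    obtain y where "z = of_real y" "0 \<le> y" "y \<le> q" using \<open>z \<in> S\<close> by (auto simp: S_def)
    then show ?thesis
      using norm_pochhammer_exp_Ln_le[of y q s K] assms by (simp add: f_def)
  qed
  have deriv: "(f i has_field_derivative f (Suc i) z) (at z within S)" if "z \<in> S" for i z
  proof -
    obtain y where "z = of_real y" "y \<le> q" using \<open>z \<in> S\<close> by (auto simp: S_def)
    then have "1 - z \<notin> \<real>\<^sub>\<le>\<^sub>0" using assms by (auto simp: complex_nonpos_Reals_iff)
    from has_field_derivative_pochhammer_exp_Ln[OF this] show ?thesis
      unfolding f_def by (rule has_field_derivative_at_within)
  qed
  have "cmod (f 0 (of_real x) - (\<Sum>i<K. f i 0 * of_real x ^ i / fact i))
      \<le> binomial_remainder_bound q s K * x ^ K"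
  proof (cases K)
    case 0
    then show ?thesis using f_K \<open>of_real x \<in> S\<close> by simp
  next
    case (Suc n)
    have f_Suc_n: "cmod (f (Suc n) z) \<le> binomial_remainder_bound q s K" if "z \<in> S" for z
      using f_K[OF that] by (simp add: Suc)
    have "cmod (f 0 (of_real x) - (\<Sum>i\<le>n. f i 0 * (of_real x - 0) ^ i / fact i))
        \<le> binomial_remainder_bound q s K * cmod (of_real x - 0) ^ Suc n / fact n"
      by (rule complex_Taylor[of S n f])
         (auto intro: deriv f_Suc_n \<open>convex S\<close> \<open>0 \<in> S\<close> \<open>of_real x \<in> S\<close>)
    also have "\<dots> \<le> binomial_remainder_bound q s K * x ^ K"
    proof -
      have "0 \<le> binomial_remainder_bound q s K * x ^ K"
        using assms by (simp add: binomial_remainder_bound_def)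
      then show ?thesis
        using Suc assms by (simp add: divide_le_eq mult_le_cancel_left1 fact_ge_1 norm_power)
    qed
    finally show ?thesis by (simp add: Suc lessThan_Suc_atMost)
  qed
  moreover have "binomial_remainder s K x =
      f 0 (of_real x) - (\<Sum>i<K. f i 0 * of_real x ^ i / fact i)"
    using assms by (simp add: binomial_remainder_def f_def flip: Ln_of_real)
  ultimately show ?thesis by simp
qed

lemma norm_qpow: "0 < q \<Longrightarrow> cmod (qpow q w) = q powr Re w"
  by (simp add: qpow_def powr_def)

lemma qpow_of_nat_mult: "qpow q (of_nat n * t) = qpow q t ^ n"
  by (simp add: qpow_def mult.assoc flip: exp_of_nat_mult)

lemma qpow_add_of_nat:
  assumes "0 < q"
  shows "qpow q (t + of_nat k) = qpow q t * of_real q ^ k"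
proof -
  have "qpow q (t + of_nat k) = qpow q t * exp (of_real (ln q)) ^ k"
    by (simp add: qpow_def distrib_right exp_add flip: exp_of_nat_mult)
  then show ?thesis
    using assms by (simp add: exp_of_real)
qed

lemma qpoles_iff:
  assumes "0 < q" "q < 1"
  shows "t \<in> qpoles q \<longleftrightarrow> (\<exists>k. qpow q (t + of_nat k) = 1)"
proof -
  have L: "ln q \<noteq> 0" using assms by simp
  have qpow_eq_1: "qpow q (t + of_nat k) = 1 \<longleftrightarrow>
      (\<exists>b::int. t = - of_nat k + 2 * of_real pi * \<i> * of_int b / of_real (ln q))" for k
  proof -
    have "qpow q (t + of_nat k) = 1 \<longleftrightarrow>
        (\<exists>b::int. (t + of_nat k) * of_real (ln q) = 2 * of_real pi * \<i> * of_int b)"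
      unfolding qpow_def exp_eq[of _ 0, simplified] by (simp add: algebra_simps)
    also have "\<dots> \<longleftrightarrow> (\<exists>b::int. t = - of_nat k + 2 * of_real pi * \<i> * of_int b / of_real (ln q))"
      using L by (simp add: field_simps)
    finally show ?thesis .
  qed
  show ?thesis
  proof
    assume "t \<in> qpoles q"
    then obtain a b where "t = of_int a + 2 * of_real pi * \<i> * of_int b / of_real (ln q)" "a \<le> 0"
      unfolding qpoles_def by blast
    then have "qpow q (t + of_nat (nat (- a))) = 1"
      unfolding qpow_eq_1 by auto
    then show "\<exists>k. qpow q (t + of_nat k) = 1" ..
  next
    assume "\<exists>k. qpow q (t + of_nat k) = 1"
    then obtain k b where "t = of_int (- int k) + 2 * of_real pi * \<i> * of_int b / of_real (ln q)"
      unfolding qpow_eq_1 by auto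
    then show "t \<in> qpoles q"
      unfolding qpoles_def by (intro CollectI exI[of _ "- int k"] exI[of _ b]) simp
  qed
qed

lemma Re_le_0_if_qpoles: "t \<in> qpoles q \<Longrightarrow> Re t \<le> 0"
  unfolding qpoles_def by (auto simp: Re_divide)

lemma closed_qpoles:
  assumes "0 < q" "q < 1"
  shows "closed (qpoles q)"
proof -
  have L: "ln q \<noteq> 0" using assms by simp
  have "qpoles q = Re -` (\<int> \<inter> {..0}) \<inter> (\<lambda>z. Im z * ln q / (2 * pi)) -` \<int>"
  proof (intro equalityI subsetI)
    fix z assume "z \<in> qpoles q"
    then obtain a b where z: "z = of_int a + 2 * of_real pi * \<i> * of_int b / of_real (ln q)" "a \<le> 0"
      unfolding qpoles_def by blast
    then have "Re z = a" "Im z * ln q / (2 * pi) = b"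
      using L by (simp_all add: Re_divide Im_divide power2_eq_square)
    then show "z \<in> Re -` (\<int> \<inter> {..0}) \<inter> (\<lambda>z. Im z * ln q / (2 * pi)) -` \<int>"
      using z(2) by auto
  next
    fix z assume "z \<in> Re -` (\<int> \<inter> {..0}) \<inter> (\<lambda>z. Im z * ln q / (2 * pi)) -` \<int>"
    then obtain a b where ab: "Re z = of_int a" "Im z * ln q / (2 * pi) = of_int b" "a \<le> 0"
      by (auto elim!: Ints_cases)
    then have "z = of_int a + 2 * of_real pi * \<i> * of_int b / of_real (ln q)"
      using L by (intro complex_eqI)
        (simp_all add: Re_divide Im_divide power2_eq_square field_simps)
    then show "z \<in> qpoles q"
      unfolding qpoles_def using ab(3) by blast
  qed
  also have "closed \<dots>"
    by (intro closed_Int closed_vimage closed_Ints closed_atMost continuous_intros) auto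
  finally show ?thesis .
qed

lemma connected_Compl_qpoles: "connected (- qpoles q)"
proof -
  have "qpoles q \<subseteq> (\<lambda>(a, b). of_int a + 2 * of_real pi * \<i> * of_int b / of_real (ln q)) ` UNIV"
    unfolding qpoles_def by auto
  then have "countable (qpoles q)"
    by (rule countable_subset) simp
  then show ?thesis
    using connected_open_diff_countable[of UNIV "qpoles q"]
    by (simp add: Compl_eq_Diff_UNIV connected_UNIV)
qed

definition zeta_q_tail :: "real \<Rightarrow> complex \<Rightarrow> nat \<Rightarrow> complex \<Rightarrow> complex" where
  "zeta_q_tail q s K t = (\<Sum>n. qpow q (of_nat (Suc n) * t) * binomial_remainder s K (q ^ Suc n))"

lemma norm_zeta_q_tail_term_le:
  assumes "0 < q" "q < 1"
  shows "cmod (qpow q (of_nat (Suc n) * t) * binomial_remainder s K (q ^ Suc n))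
           \<le> binomial_remainder_bound q s K * (q powr (Re t + K)) ^ Suc n"
proof -
  have "cmod (qpow q (of_nat (Suc n) * t) * binomial_remainder s K (q ^ Suc n))
      = (q powr Re t) ^ Suc n * cmod (binomial_remainder s K (q ^ Suc n))"
    by (simp only: norm_mult qpow_of_nat_mult norm_power norm_qpow[OF assms(1)])
  also have "\<dots> \<le> (q powr Re t) ^ Suc n * (binomial_remainder_bound q s K * (q ^ Suc n) ^ K)"
    using assms by (intro mult_left_mono norm_binomial_remainder_le) (auto simp: power_le_one)
  also have "(q ^ Suc n) ^ K = (q powr K) ^ Suc n"
    by (metis powr_realpow[OF assms(1)] power_mult mult.commute)
  finally show ?thesis
    using assms by (simp add: powr_add power_mult_distrib mult_ac)
qed

lemma summable_zeta_q_tail: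
  assumes "0 < q" "q < 1" "0 < Re t + K"
  shows "summable (\<lambda>n. qpow q (of_nat (Suc n) * t) * binomial_remainder s K (q ^ Suc n))"
proof (rule summable_comparison_test)
  have "q powr (Re t + K) < 1"
    using assms powr_less_mono'[of q 0 "Re t + K"] by simp
  then show "summable (\<lambda>n. binomial_remainder_bound q s K * (q powr (Re t + K)) ^ Suc n)"
    by (intro summable_mult summable_ignore_initial_segment[of _ 1, simplified] summable_geometric)
       simp
qed (use norm_zeta_q_tail_term_le[OF assms(1,2)] in auto)

lemma norm_zeta_q_tail_le:
  assumes "0 < q" "q < 1" "0 < Re t + K"
  shows "cmod (zeta_q_tail q s K t) \<le>
           binomial_remainder_bound q s K * (q powr (Re t + K) / (1 - q powr (Re t + K)))"
proof -
  define z where "z = q powr (Re t + K)"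
  have "z < 1"
    using assms powr_less_mono'[of q 0 "Re t + K"] by (simp add: z_def)
  then have geo: "(\<lambda>n. binomial_remainder_bound q s K * z ^ Suc n) sums
      (binomial_remainder_bound q s K * (z / (1 - z)))"
    using sums_mult[OF geometric_sums, of z "binomial_remainder_bound q s K * z"]
    by (simp add: z_def field_simps)
  have "cmod (zeta_q_tail q s K t) \<le> (\<Sum>n. binomial_remainder_bound q s K * z ^ Suc n)"
    unfolding zeta_q_tail_def z_def
    by (rule norm_suminf_le[OF norm_zeta_q_tail_term_le[OF assms(1,2)]])
       (use sums_summable[OF geo] in \<open>simp add: z_def\<close>)
  also have "\<dots> = binomial_remainder_bound q s K * (z / (1 - z))"
    using geo by (rule sums_unique[symmetric])
  finally show ?thesis by (simp add: z_def)
qed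

lemma summable_binomial_remainder_power_series:
  assumes "0 < q" "q < 1" "norm w < q powr - real K"
  shows "summable (\<lambda>n. binomial_remainder s K (q ^ Suc n) * w ^ n)"
proof (rule summable_comparison_test)
  define M where "M = binomial_remainder_bound q s K"
  show "\<exists>N. \<forall>n\<ge>N.
      norm (binomial_remainder s K (q ^ Suc n) * w ^ n) \<le> M * q ^ K * (q ^ K * norm w) ^ n"
  proof (intro exI allI impI)
    fix n
    have "cmod (binomial_remainder s K (q ^ Suc n)) \<le> M * (q ^ Suc n) ^ K"
      unfolding M_def using assms by (intro norm_binomial_remainder_le) (auto simp: power_le_one)
    then have "norm (binomial_remainder s K (q ^ Suc n)) * norm w ^ n
        \<le> M * (q ^ Suc n) ^ K * norm w ^ n"
      by (rule mult_right_mono) simp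
    then show "norm (binomial_remainder s K (q ^ Suc n) * w ^ n) \<le> M * q ^ K * (q ^ K * norm w) ^ n"
      by (simp add: norm_mult norm_power power_mult_distrib mult_ac flip: power_mult)
  qed
  have "q ^ K * q powr - real K = 1"
    using assms by (simp add: powr_minus powr_realpow)
  moreover have "q ^ K * norm w < q ^ K * q powr - real K"
    using assms by simp
  ultimately show "summable (\<lambda>n. M * q ^ K * (q ^ K * norm w) ^ n)"
    using assms by (intro summable_mult summable_geometric) simp
qed

(* The tail is q^t P(q^t) for the power series P with coefficients R_K(q^(n+1)), of radius >= q^(-K). *)
lemma holomorphic_zeta_q_tail:
  assumes "0 < q" "q < 1"
  shows "zeta_q_tail q s K holomorphic_on {t. - real K < Re t}"
proof -
  define P where "P w = (\<Sum>n. binomial_remainder s K (q ^ Suc n) * w ^ n)" for w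
  have P_holomorphic: "P holomorphic_on ball 0 (q powr - real K)"
  proof (rule power_series_holomorphic[where a = "\<lambda>n. binomial_remainder s K (q ^ Suc n)"])
    fix w :: complex assume "w \<in> ball 0 (q powr - real K)"
    then have "summable (\<lambda>n. binomial_remainder s K (q ^ Suc n) * w ^ n)"
      using assms by (intro summable_binomial_remainder_power_series) auto
    then show "(\<lambda>n. binomial_remainder s K (q ^ Suc n) * (w - 0) ^ n) sums P w"
      unfolding P_def diff_zero by (rule summable_sums)
  qed
  have qpow_holomorphic: "qpow q holomorphic_on {t. - real K < Re t}"
    unfolding qpow_def by (intro holomorphic_intros)
  have qpow_in_ball: "qpow q ` {t. - real K < Re t} \<subseteq> ball 0 (q powr - real K)"
    using assms powr_less_mono'[of q "- real K"] by (auto simp: norm_qpow)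
  have "(\<lambda>t. qpow q t * P (qpow q t)) holomorphic_on {t. - real K < Re t}"
    using holomorphic_on_compose_gen[OF qpow_holomorphic P_holomorphic qpow_in_ball]
    by (intro holomorphic_on_mult qpow_holomorphic) (simp add: o_def)
  moreover have "qpow q t * P (qpow q t) = zeta_q_tail q s K t" if "t \<in> {t. - real K < Re t}" for t
  proof -
    have "zeta_q_tail q s K t =
        (\<Sum>n. qpow q t * (binomial_remainder s K (q ^ Suc n) * qpow q t ^ n))"
      unfolding zeta_q_tail_def qpow_of_nat_mult by (simp add: mult_ac)
    also have "\<dots> = qpow q t * P (qpow q t)"
      unfolding P_def using qpow_in_ball that assms
      by (intro suminf_mult summable_binomial_remainder_power_series) auto
    finally show ?thesis by simp
  qed
  ultimately show ?thesis
    by (rule holomorphic_transform)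
qed

lemma zeta_q_tail_Suc:
  assumes "0 < q" "q < 1" "0 < Re t + K"
  shows "zeta_q_tail q s (Suc K) t = zeta_q_tail q s K t -
           pochhammer s K / fact K * (qpow q (t + of_nat K) / (1 - qpow q (t + of_nat K)))"
proof -
  define w where "w = qpow q (t + of_nat K)"
  have "norm w < 1"
    using assms powr_less_mono'[of q 0 "Re t + K"] by (simp add: w_def norm_qpow)
  then have geo: "(\<lambda>n. w ^ Suc n) sums (w / (1 - w))"
    using sums_mult[OF geometric_sums, of w w] by (simp add: field_simps)
  have term_Suc: "qpow q (of_nat (Suc n) * t) * binomial_remainder s (Suc K) (q ^ Suc n) =
      qpow q (of_nat (Suc n) * t) * binomial_remainder s K (q ^ Suc n) -
        pochhammer s K / fact K * w ^ Suc n"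
    for n
  proof -
    have "qpow q (of_nat (Suc n) * t) * of_real (q ^ Suc n) ^ K = w ^ Suc n"
      unfolding w_def qpow_add_of_nat[OF assms(1)] qpow_of_nat_mult
      by (simp add: power_mult_distrib flip: power_mult)
         (simp add: power_mult[symmetric] mult.commute)
    then show ?thesis
      by (simp add: binomial_remainder_def algebra_simps)
  qed
  have "(\<lambda>n. qpow q (of_nat (Suc n) * t) * binomial_remainder s (Suc K) (q ^ Suc n)) sums
      (zeta_q_tail q s K t - pochhammer s K / fact K * (w / (1 - w)))"
    unfolding term_Suc zeta_q_tail_def
    by (intro sums_diff summable_sums summable_zeta_q_tail assms sums_mult geo)
  then show ?thesis
    unfolding w_def[symmetric] zeta_q_tail_def[of q s "Suc K"] by (rule sums_unique[symmetric])
qed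

definition zeta_q_head :: "real \<Rightarrow> complex \<Rightarrow> nat \<Rightarrow> complex \<Rightarrow> complex" where
  "zeta_q_head q s K t =
     (\<Sum>k<K. pochhammer s k / fact k * (qpow q (t + of_nat k) / (1 - qpow q (t + of_nat k))))"

definition zeta_q_cont :: "real \<Rightarrow> complex \<Rightarrow> nat \<Rightarrow> complex \<Rightarrow> complex" where
  "zeta_q_cont q s K t =
     exp (s * of_real (ln (1 - q))) * (zeta_q_head q s K t + zeta_q_tail q s K t)"

lemma zeta_q_cont_0_eq_series:
  assumes "0 < q" "q < 1" "0 < Re t"
  shows "zeta_q_cont q s 0 t = zeta_q_series q s t"
proof -
  define A where "A = exp (s * of_real (ln (1 - q)))"
  have "qpow q (of_nat (Suc n) * t) / exp (s * of_real (ln (qint q (Suc n))))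
      = A * (qpow q (of_nat (Suc n) * t) * binomial_remainder s 0 (q ^ Suc n))" for n
  proof -
    have "q ^ Suc n < 1"
      using assms by (intro power_Suc_less_one)
    then have ln_qint: "ln (qint q (Suc n)) = ln (1 - q ^ Suc n) - ln (1 - q)"
      unfolding qint_def using assms by (simp add: ln_div)
    have "s * of_real (ln (1 - q)) + - s * of_real (ln (1 - q ^ Suc n)) +
        s * of_real (ln (qint q (Suc n))) = 0"
      unfolding ln_qint by (simp add: algebra_simps)
    then have "A * exp (- s * of_real (ln (1 - q ^ Suc n))) *
        exp (s * of_real (ln (qint q (Suc n)))) = 1"
      unfolding A_def by (simp flip: exp_add)
    then show ?thesis
      by (simp add: binomial_remainder_def field_simps)
  qed
  then have "zeta_q_series q s t =
      (\<Sum>n. A * (qpow q (of_nat (Suc n) * t) * binomial_remainder s 0 (q ^ Suc n)))"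
    by (simp add: zeta_q_series_def)
  also have "\<dots> = A * zeta_q_tail q s 0 t"
    unfolding zeta_q_tail_def using assms by (intro suminf_mult summable_zeta_q_tail) auto
  finally show ?thesis
    by (simp add: zeta_q_cont_def zeta_q_head_def A_def)
qed

lemma zeta_q_cont_Suc:
  assumes "0 < q" "q < 1" "0 < Re t + K"
  shows "zeta_q_cont q s (Suc K) t = zeta_q_cont q s K t"
  using assms by (simp add: zeta_q_cont_def zeta_q_head_def zeta_q_tail_Suc)

lemma zeta_q_cont_eq:
  assumes "0 < q" "q < 1" "0 < Re t + K" "0 < Re t + K'"
  shows "zeta_q_cont q s K t = zeta_q_cont q s K' t"
proof -
  have *: "zeta_q_cont q s (K + j) t = zeta_q_cont q s K t" if "0 < Re t + K" for K j
    using that by (induction j) (simp_all add: zeta_q_cont_Suc[OF assms(1,2)])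
  show ?thesis
    using *[of K "K' - K"] *[of K' "K - K'"] assms by (cases "K \<le> K'") simp_all
qed

lemma holomorphic_zeta_q_cont:
  assumes "0 < q" "q < 1"
  shows "zeta_q_cont q s K holomorphic_on {t. - real K < Re t} - qpoles q"
proof -
  have "1 - qpow q (t + of_nat k) \<noteq> 0" if "t \<notin> qpoles q" for t k
    using that qpoles_iff[OF assms, of t] by auto
  then show ?thesis
    unfolding zeta_q_cont_def zeta_q_head_def
    by (intro holomorphic_intros holomorphic_on_subset[OF holomorphic_zeta_q_tail[OF assms]])
       (auto simp: qpow_def intro!: holomorphic_intros)
qed

lemma add_nat_floor_uminus_pos: "0 < x + real (nat (\<lfloor>- x\<rfloor> + 1))"
  by linarith

lemma zeta_q_eqI:
  assumes "0 < q" "q < 1" and holo: "f holomorphic_on - qpoles q"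
    and series: "\<And>u. 0 < Re u \<Longrightarrow> f u = zeta_q_series q s u" and "t \<notin> qpoles q"
  shows "zeta_q q s t = f t"
proof -
  define P where "P g \<longleftrightarrow> g holomorphic_on - qpoles q \<and> (\<forall>u. 0 < Re u \<longrightarrow> g u = zeta_q_series q s u)"
    for g
  have "P f"
    using holo series by (simp add: P_def)
  then have "P (SOME g. P g)"
    using someI[of P f] by blast
  have "(SOME g. P g) t = f t"
  proof (rule analytic_continuation_open[of "{u. 0 < Re u}" "- qpoles q" "SOME g. P g" f t])
    show "open {u. 0 < Re u}" "{u. 0 < Re u} \<noteq> {}"
      by (auto simp: open_halfspace_Re_gt intro: exI[of _ 1])
    show "open (- qpoles q)"
      using closed_qpoles[OF assms(1,2)] by (simp add: open_Compl)
    show "{u. 0 < Re u} \<subseteq> - qpoles q"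
      using Re_le_0_if_qpoles by fastforce
  qed (use \<open>P (SOME g. P g)\<close> holo series assms(5) connected_Compl_qpoles in \<open>auto simp: P_def\<close>)
  then show ?thesis
    by (simp add: zeta_q_def P_def)
qed

lemma zeta_q_eq_zeta_q_cont:
  assumes "0 < q" "q < 1" "t \<notin> qpoles q" "0 < Re t + K"
  shows "zeta_q q s t = zeta_q_cont q s K t"
proof -
  define F where "F u = zeta_q_cont q s (nat (\<lfloor>- Re u\<rfloor> + 1)) u" for u
  have F_eq: "F u = zeta_q_cont q s K' u" if "0 < Re u + K'" for u K'
    unfolding F_def using that add_nat_floor_uminus_pos by (intro zeta_q_cont_eq[OF assms(1,2)])
  have "F holomorphic_on (\<Union>K'. {u. - real K' < Re u} - qpoles q)"
  proof (rule holomorphic_on_UN_open)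
    fix K'
    show "F holomorphic_on {u. - real K' < Re u} - qpoles q"
      by (rule holomorphic_transform[OF holomorphic_zeta_q_cont[OF assms(1,2), of s K']])
         (auto intro!: F_eq[symmetric])
    show "open ({u. - real K' < Re u} - qpoles q)"
      by (intro open_Diff closed_qpoles assms open_halfspace_Re_gt)
  qed
  also have "(\<Union>K'. {u. - real K' < Re u} - qpoles q) = - qpoles q"
  proof (intro equalityI subsetI)
    fix u assume "u \<in> - qpoles q"
    moreover have "- real (nat (\<lfloor>- Re u\<rfloor> + 1)) < Re u"
      using add_nat_floor_uminus_pos[of "Re u"] by linarith
    ultimately show "u \<in> (\<Union>K'. {u. - real K' < Re u} - qpoles q)"
      by blast
  qed auto
  finally have "zeta_q q s t = F t"
    using F_eq[of _ 0] zeta_q_cont_0_eq_series[OF assms(1,2)] assms(3)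
    by (intro zeta_q_eqI[OF assms(1,2)]) auto
  also have "F t = zeta_q_cont q s K t"
    using assms(4) by (rule F_eq)
  finally show ?thesis .
qed

lemma norm_binomial_coeff_le:
  assumes "k < K"
  shows "cmod (pochhammer s k / fact k) \<le> (cmod s + K) ^ K"
proof -
  have "cmod (pochhammer s k / fact k) \<le> cmod (pochhammer s k)"
    by (simp add: norm_divide divide_le_eq mult_le_cancel_left1 fact_ge_1)
  also have "\<dots> \<le> (cmod s + k) ^ k"
    by (rule norm_pochhammer_le)
  also have "\<dots> \<le> (cmod s + K) ^ k"
    using assms by (intro power_mono) auto
  also have "\<dots> \<le> (cmod s + K) ^ K"
    using assms by (intro power_increasing add_increasing) auto
  finally show ?thesis .
qed

lemma norm_zeta_q_head_le:
  assumes "0 < q" "0 < \<epsilon>" and sep: "\<And>k. \<epsilon> < cmod (1 - qpow q (t + of_nat k))"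
  shows "cmod (zeta_q_head q s K t) \<le> (cmod s + K) ^ K * (\<Sum>k<K. q powr (Re t + real k) / \<epsilon>)"
  unfolding zeta_q_head_def sum_distrib_left
proof (rule order.trans[OF norm_sum sum_mono])
  fix k assume "k \<in> {..<K}"
  have "cmod (qpow q (t + of_nat k) / (1 - qpow q (t + of_nat k))) =
      q powr (Re t + k) / cmod (1 - qpow q (t + of_nat k))"
    using assms by (simp add: norm_divide norm_qpow)
  also have "\<dots> \<le> q powr (Re t + k) / \<epsilon>"
    using sep[of k] \<open>0 < \<epsilon>\<close> by (intro divide_left_mono mult_pos_pos) auto
  finally show "cmod (pochhammer s k / fact k *
      (qpow q (t + of_nat k) / (1 - qpow q (t + of_nat k)))) \<le> (cmod s + K) ^ K * (q powr (Re t + k) / \<epsilon>)"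
    unfolding norm_mult using norm_binomial_coeff_le[of k K s] \<open>k \<in> {..<K}\<close>
    by (intro mult_mono) auto
qed

lemma norm_zeta_q_cont_le:
  assumes "0 < q" "q < 1" "0 < Re t + K" "0 < \<epsilon>"
    and "\<And>k. \<epsilon> < cmod (1 - qpow q (t + of_nat k))"
  shows "cmod (zeta_q_cont q s K t) \<le> (1 - q) powr Re s *
           ((\<Sum>k<K. q powr (Re t + real k) / \<epsilon>) +
            max 1 ((1 - q) powr - (Re s + K)) * (q powr (Re t + K) / (1 - q powr (Re t + K))))
           * (cmod s + K) ^ K"
proof -
  define X where "X = (cmod s + K) ^ K"
  define z where "z = q powr (Re t + K)"
  have "0 \<le> z / (1 - z)"
    using assms powr_less_mono'[of q 0 "Re t + K"] by (simp add: z_def)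
  have tail_le: "cmod (zeta_q_tail q s K t) \<le> X * max 1 ((1 - q) powr - (Re s + K)) * (z / (1 - z))"
  proof -
    have "binomial_remainder_bound q s K \<le> X * max 1 ((1 - q) powr - (Re s + K))"
      unfolding binomial_remainder_bound_def X_def
      by (intro mult_right_mono order.trans[OF norm_pochhammer_le]) auto
    then show ?thesis
      using norm_zeta_q_tail_le[OF assms(1-3), of s] mult_right_mono[OF _ \<open>0 \<le> z / (1 - z)\<close>]
      unfolding z_def by (meson order.trans)
  qed
  have norm_factor: "cmod (exp (s * of_real (ln (1 - q)))) = (1 - q) powr Re s"
    using assms by (simp add: powr_def)
  have "cmod (zeta_q_cont q s K t) \<le>
      (1 - q) powr Re s * (cmod (zeta_q_head q s K t) + cmod (zeta_q_tail q s K t))"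
    unfolding zeta_q_cont_def norm_mult norm_factor
    by (intro mult_left_mono norm_triangle_ineq) auto
  also have "\<dots> \<le> (1 - q) powr Re s * (X * (\<Sum>k<K. q powr (Re t + k) / \<epsilon>) +
      X * max 1 ((1 - q) powr - (Re s + K)) * (z / (1 - z)))"
    unfolding X_def
    by (intro mult_left_mono add_mono norm_zeta_q_head_le tail_le[unfolded X_def] assms) auto
  finally show ?thesis
    by (simp add: X_def z_def algebra_simps)
qed

lemma zeta_q_polynomial_bound:
  assumes "0 < q" "q < 1" "0 < \<epsilon>" "0 < \<tau> + K"
  shows "\<exists>D\<ge>0. \<forall>s t. Re s = \<sigma> \<longrightarrow> Re t = \<tau> \<longrightarrow> (\<forall>k. \<epsilon> < cmod (1 - qpow q (t + of_nat k))) \<longrightarrow>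
           cmod (zeta_q q s t) \<le> D * (cmod s + K) ^ K"
proof -
  define D where "D = (1 - q) powr \<sigma> *
    ((\<Sum>k<K. q powr (\<tau> + k) / \<epsilon>) +
     max 1 ((1 - q) powr - (\<sigma> + K)) * (q powr (\<tau> + K) / (1 - q powr (\<tau> + K))))"
  have "0 \<le> D"
    unfolding D_def using assms powr_less_mono'[of q 0 "\<tau> + K"]
    by (intro mult_nonneg_nonneg add_nonneg_nonneg sum_nonneg) auto
  moreover have "cmod (zeta_q q s t) \<le> D * (cmod s + K) ^ K"
    if "Re s = \<sigma>" "Re t = \<tau>" and sep: "\<forall>k. \<epsilon> < cmod (1 - qpow q (t + of_nat k))" for s t
  proof -
    have "t \<notin> qpoles q"
    proof
      assume "t \<in> qpoles q"
      then obtain k where "qpow q (t + of_nat k) = 1"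
        using qpoles_iff assms by blast
      then show False
        using sep[rule_format, of k] assms by simp
    qed
    then have "zeta_q q s t = zeta_q_cont q s K t"
      using assms that by (intro zeta_q_eq_zeta_q_cont) auto
    then show ?thesis
      using norm_zeta_q_cont_le[of q t K \<epsilon> s] sep assms that by (simp add: D_def)
  qed
  ultimately show ?thesis by blast
qed

lemma power_le_exp_mult:
  fixes b x :: real
  assumes "0 < b" "0 \<le> x"
  shows "x ^ K \<le> (real K / b) ^ K * exp (b * x)"
proof (cases "K = 0")
  case True
  then show ?thesis using assms by simp
next
  case False
  have "(b * x / K) ^ K \<le> (1 + b * x / K) ^ K"
    using assms by (intro power_mono) auto
  also have "\<dots> \<le> exp (b * x)"
    using assms False by (intro exp_ge_one_plus_x_over_n_power_n) (auto intro: order.trans[of _ 0])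
  finally show ?thesis
    using assms False by (simp add: power_divide power_mult_distrib field_simps)
qed

lemma polynomial_growth_cases:
  fixes D a \<tau> :: real
  assumes "0 \<le> D" "0 \<le> a" and "0 < \<tau> \<Longrightarrow> K = 0" and "\<tau> = 0 \<Longrightarrow> K = 1"
  shows "\<exists>C>0. \<forall>v. 1 \<le> \<bar>v\<bar> \<longrightarrow> D * (a + \<bar>v\<bar>) ^ K \<le>
           (if \<tau> > 0 then C else if \<tau> = 0 then C * \<bar>v\<bar> else C * exp (- \<tau> * (1 + pi / 2) * \<bar>v\<bar>))"
proof -
  consider "0 < \<tau>" | "\<tau> = 0" | "\<tau> < 0" by linarith
  then show ?thesis
  proof cases
    case 1
    then show ?thesis using assms by (intro exI[of _ "D + 1"]) auto
  next
    case 2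
    have "D * (a + \<bar>v\<bar>) \<le> (D * (a + 1) + 1) * \<bar>v\<bar>" if "1 \<le> \<bar>v\<bar>" for v
    proof -
      have "a * 1 \<le> a * \<bar>v\<bar>"
        using that assms by (intro mult_left_mono) auto
      then have "D * (a + \<bar>v\<bar>) \<le> D * ((a + 1) * \<bar>v\<bar>)"
        using assms by (intro mult_left_mono) (auto simp: algebra_simps)
      then show ?thesis
        by (simp add: algebra_simps)
    qed
    moreover have "0 < D * (a + 1) + 1"
      using assms by (simp add: add_nonneg_pos)
    ultimately show ?thesis
      using 2 assms by (intro exI[of _ "D * (a + 1) + 1"]) auto
  next
    case 3
    define b where "b = - \<tau> * (1 + pi / 2)"
    have "0 < b"
      unfolding b_def using 3 pi_gt_zero by (simp add: mult_neg_pos add_pos_pos zero_less_mult_iff)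
    define C where "C = D * ((real K / b) ^ K * exp (b * a)) + 1"
    have "D * (a + \<bar>v\<bar>) ^ K \<le> C * exp (b * \<bar>v\<bar>)" for v
    proof -
      have "D * (a + \<bar>v\<bar>) ^ K \<le> D * ((real K / b) ^ K * exp (b * (a + \<bar>v\<bar>)))"
        using power_le_exp_mult[OF \<open>0 < b\<close>, of "a + \<bar>v\<bar>" K] assms by (intro mult_left_mono) auto
      also have "\<dots> \<le> C * exp (b * \<bar>v\<bar>)"
        by (simp add: C_def distrib_left exp_add algebra_simps)
      finally show ?thesis .
    qed
    moreover have "0 < C"
      unfolding C_def using assms \<open>0 < b\<close> by (simp add: add_nonneg_pos)
    ultimately show ?thesis
      using 3 by (intro exI[of _ C]) (simp add: b_def)
  qed
qed

theorem theorem1p1: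
  fixes \<epsilon> q \<sigma> \<tau> :: real
  assumes "\<epsilon> > 0" and "0 < q" and "q < 1"
  shows "\<exists>C>0. \<exists>V0>0. \<forall>v t. \<bar>v\<bar> \<ge> V0 \<longrightarrow> Re t = \<tau> \<longrightarrow>
           (INF r\<in>(UNIV::nat set). cmod (1 - qpow q (t + of_nat r))) > \<epsilon> \<longrightarrow>
           cmod (zeta_q q (Complex \<sigma> v) t) \<le>
             (if \<tau> > 0 then C
              else if \<tau> = 0 then C * \<bar>v\<bar>
              else C * exp (- \<tau> * (1 + pi / 2) * \<bar>v\<bar>))"
proof -
  define K where "K = nat (\<lfloor>- \<tau>\<rfloor> + 1)"
  have K_pos: "K = 0" if "0 < \<tau>"
    using that by (simp add: K_def) linarith
  have K_zero: "K = 1" if "\<tau> = 0"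
    using that by (simp add: K_def)
  obtain D where "0 \<le> D" and D: "\<forall>s t. Re s = \<sigma> \<longrightarrow> Re t = \<tau> \<longrightarrow>
      (\<forall>k. \<epsilon> < cmod (1 - qpow q (t + of_nat k))) \<longrightarrow> cmod (zeta_q q s t) \<le> D * (cmod s + K) ^ K"
    using zeta_q_polynomial_bound[OF assms(2,3,1) add_nat_floor_uminus_pos[of \<tau>, folded K_def]]
    by blast
  obtain C where "0 < C" and C: "\<forall>v. 1 \<le> \<bar>v\<bar> \<longrightarrow> D * (\<bar>\<sigma>\<bar> + K + \<bar>v\<bar>) ^ K \<le>
      (if \<tau> > 0 then C else if \<tau> = 0 then C * \<bar>v\<bar> else C * exp (- \<tau> * (1 + pi / 2) * \<bar>v\<bar>))"
    using polynomial_growth_cases[OF \<open>0 \<le> D\<close>, of "\<bar>\<sigma>\<bar> + K" \<tau> K] K_pos K_zero by auto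
  have "cmod (zeta_q q (Complex \<sigma> v) t) \<le>
      (if \<tau> > 0 then C else if \<tau> = 0 then C * \<bar>v\<bar> else C * exp (- \<tau> * (1 + pi / 2) * \<bar>v\<bar>))"
    if "1 \<le> \<bar>v\<bar>" "Re t = \<tau>" and INF: "(INF r. cmod (1 - qpow q (t + of_nat r))) > \<epsilon>" for v t
  proof -
    have "bdd_below (range (\<lambda>r. cmod (1 - qpow q (t + of_nat r))))"
      by (rule bdd_belowI[of _ 0]) auto
    then have "\<epsilon> < cmod (1 - qpow q (t + of_nat k))" for k
      using less_cINF_D[OF _ INF] by blast
    then have "cmod (zeta_q q (Complex \<sigma> v) t) \<le> D * (cmod (Complex \<sigma> v) + K) ^ K"
      using D that(2) by simp
    also have "\<dots> \<le> D * (\<bar>\<sigma>\<bar> + K + \<bar>v\<bar>) ^ K"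
      using cmod_le[of "Complex \<sigma> v"] \<open>0 \<le> D\<close> by (intro mult_left_mono power_mono) auto
    finally show ?thesis
      using C that(1) by fastforce
  qed
  then show ?thesis
    using \<open>0 < C\<close> by (intro exI[of _ C] conjI exI[of _ 1]) auto
qed

end
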